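(* Let $f:\mathcal{S}\to\mathbb{R}$ be continuously differentiable with $f^{\inf}:=\inf_{X\in\mathcal{S}}f(X)>-\infty$, and suppose $f$ is layer-wise $(L^0,L^1)$-smooth with constants $L^0=(L^0_1,\dots,L^0_p)\in\mathbb{R}^p_+$ and $L^1=(L^1_1,\dots,L^1_p)$ with $L^1_i>0$ for all $i$. Fix $\varepsilon>0$ and let $X^0,X^1,\dots$ be the iterates of deterministic Gluon run from $X^0$ with radii $$t_i^k=\frac{\|\nabla_i f(X^k)\|_{(i)\star}}{L^0_i+L^1_i\|\nabla_i f(X^k)\|_{(i)\star}}$$ (with $t_i^k:=0$, i.e. $X_i^{k+1}=X_i^k$, whenever $\nabla_i f(X^k)=0$). Let $\Delta^0:=f(X^0)-f^{\inf}$, $H:=\frac1p\sum_{j=1}^p \frac{1}{L^1_j}$, and $$K:=\left\lceil \frac{2\Delta^0\sum_{i=1}^p \frac{L^0_i}{(L^1_i)^2}}{\varepsilon^2 H^2}+\frac{2\Delta^0}{\varepsilon H}\right\rceil .$$ Then, provided $K\ge 1$, $$\min_{k=0,\dots,K-1}\ \sum_{i=1}^p \frac{1/L^1_i}{H}\,\|\nabla_i f(X^k)\|_{(i)\star}\le\varepsilon .$$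
   Context: $\mathcal{S}=\mathcal{S}_1\times\cdots\times\mathcal{S}_p$ with $\mathcal{S}_i=\mathbb{R}^{m_i\times n_i}$; an element is written $X=[X_1,\dots,X_p]$. Each $\mathcal{S}_i$ carries the trace inner product $\langle X_i,Y_i\rangle_{(i)}=\operatorname{tr}(X_i^\top Y_i)$ and an arbitrary norm $\|\cdot\|_{(i)}$ with dual norm $\|Y_i\|_{(i)\star}=\sup_{\|Z_i\|_{(i)}\le 1}\langle Y_i,Z_i\rangle_{(i)}$. $\nabla_i f(X)\in\mathcal{S}_i$ denotes the block of the gradient of $f$ corresponding to $X_i$ (w.r.t. the sum of trace inner products). Layer-wise $(L^0,L^1)$-smoothness: for all $i$ and all $X,Y\in\mathcal{S}$, $\|\nabla_i f(X)-\nabla_i f(Y)\|_{(i)\star}\le (L^0_i+L^1_i\|\nabla_i f(X)\|_{(i)\star})\|X_i-Y_i\|_{(i)}$. Deterministic Gluon: for $k=0,1,\dots$ and each $i=1,\dots,p$, given radius $t_i^k\ge0$, set $X_i^{k+1}\in\arg\min\{\langle \nabla_i f(X^k),X_i\rangle_{(i)}: X_i\in\mathcal{S}_i,\ \|X_i-X_i^k\|_{(i)}\le t_i^k\}$ (any minimizer), and $X^{k+1}=[X_1^{k+1},\dots,X_p^{k+1}]$. *)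

theory Defs
  imports "HOL-Analysis.Analysis"
begin

text \<open>The product space S = S_1 x ... x S_p of matrix spaces, with the sum of the
trace (Frobenius) inner products, is modelled as the Euclidean space real^'c whose
(finitely many) coordinates 'c are the matrix entries of all blocks; the map
blk assigns to each coordinate the index (in 0..<p) of the block it belongs to.
Block i (the space S_i) is the subspace of vectors supported on blk^-1 {i}.\<close>

definition in_block :: "('c \<Rightarrow> nat) \<Rightarrow> nat \<Rightarrow> real^'c \<Rightarrow> bool" where
  "in_block blk i Z \<longleftrightarrow> (\<forall>c. blk c \<noteq> i \<longrightarrow> Z $ c = 0)"

definition block_proj :: "('c \<Rightarrow> nat) \<Rightarrow> nat \<Rightarrow> real^'c \<Rightarrow> real^'c" where
  "block_proj blk i X = (\<chi> c. if blk c = i then X $ c else 0)"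

definition is_block_norm :: "('c \<Rightarrow> nat) \<Rightarrow> nat \<Rightarrow> (real^'c \<Rightarrow> real) \<Rightarrow> bool" where
  "is_block_norm blk i N \<longleftrightarrow>
     (\<forall>Z. in_block blk i Z \<longrightarrow> 0 \<le> N Z \<and> (N Z = 0 \<longleftrightarrow> Z = 0)) \<and>
     (\<forall>a Z. in_block blk i Z \<longrightarrow> N (a *\<^sub>R Z) = \<bar>a\<bar> * N Z) \<and>
     (\<forall>Z W. in_block blk i Z \<longrightarrow> in_block blk i W \<longrightarrow> N (Z + W) \<le> N Z + N W)"

definition dual_norm :: "('c \<Rightarrow> nat) \<Rightarrow> nat \<Rightarrow> (real^'c \<Rightarrow> real) \<Rightarrow> real^'c \<Rightarrow> real" where
  "dual_norm blk i N Y = Sup {Y \<bullet> Z | Z. in_block blk i Z \<and> N Z \<le> 1}"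

definition layerwise_L0L1_smooth ::
  "nat \<Rightarrow> ('c \<Rightarrow> nat) \<Rightarrow> (nat \<Rightarrow> real^'c \<Rightarrow> real) \<Rightarrow> (real^'c \<Rightarrow> real^'c)
    \<Rightarrow> (nat \<Rightarrow> real) \<Rightarrow> (nat \<Rightarrow> real) \<Rightarrow> bool" where
  "layerwise_L0L1_smooth p blk N G L0 L1 \<longleftrightarrow>
     (\<forall>i<p. \<forall>X Y.
        dual_norm blk i (N i) (block_proj blk i (G X) - block_proj blk i (G Y))
        \<le> (L0 i + L1 i * dual_norm blk i (N i) (block_proj blk i (G X)))
            * N i (block_proj blk i X - block_proj blk i Y))"

text \<open>Deterministic Gluon: for every k and block i, the new block X_i^{k+1} is a minimizer
of the linear function <grad_i f(X^k), .> over the ball of radius t i k around X_i^k in S_i.\<close>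
definition gluon_iterates ::
  "nat \<Rightarrow> ('c \<Rightarrow> nat) \<Rightarrow> (nat \<Rightarrow> real^'c \<Rightarrow> real) \<Rightarrow> (real^'c \<Rightarrow> real^'c)
    \<Rightarrow> (nat \<Rightarrow> nat \<Rightarrow> real) \<Rightarrow> (nat \<Rightarrow> real^'c) \<Rightarrow> bool" where
  "gluon_iterates p blk N G t Xs \<longleftrightarrow>
     (\<forall>k. \<forall>i<p.
        N i (block_proj blk i (Xs (Suc k)) - block_proj blk i (Xs k)) \<le> t i k \<and>
        (\<forall>Z. in_block blk i Z \<longrightarrow> N i (Z - block_proj blk i (Xs k)) \<le> t i k \<longrightarrow>
             block_proj blk i (G (Xs k)) \<bullet> block_proj blk i (Xs (Suc k))
             \<le> block_proj blk i (G (Xs k)) \<bullet> Z))"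

end

theory Submission
  imports Defs
begin

text \<open>Layer-wise \<open>(L0, L1)\<close>-smoothness bounds the change of the gradient along a segment,
  which yields the block-wise descent inequality
  \<open>f Y \<le> f X + \<langle>\<nabla>f X, Y - X\<rangle> + \<Sum>\<^sub>i (L0\<^sub>i + L1\<^sub>i g\<^sub>i) N\<^sub>i(Y\<^sub>i - X\<^sub>i)\<^sup>2 / 2\<close>,
  with \<open>g\<^sub>i\<close> the dual norm of the i-th block of \<open>\<nabla>f X\<close>. A linear minimization step of
  radius \<open>t\<^sub>i\<close> lowers the linear term by \<open>t\<^sub>i g\<^sub>i\<close>, and \<open>t\<^sub>i = g\<^sub>i / (L0\<^sub>i + L1\<^sub>i g\<^sub>i)\<close>
  minimizes the resulting quadratic, so every Gluon iteration decreases f by at least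
  \<open>\<Sum>\<^sub>i g\<^sub>i\<^sup>2 / (2 (L0\<^sub>i + L1\<^sub>i g\<^sub>i))\<close>; over K iterations these decreases add up to at most
  \<open>\<Delta>\<^sup>0\<close>. By Sedrakyan's inequality, an iterate whose \<open>1 / L1\<close>-weighted gradient norm
  exceeds \<open>\<epsilon>\<close> decreases f by more than \<open>(\<epsilon> H)\<^sup>2 / (2 (C + \<epsilon> H))\<close> with
  \<open>C = \<Sum>\<^sub>i L0\<^sub>i / L1\<^sub>i\<^sup>2\<close>, and K is just large enough that K such decreases exceed
  \<open>\<Delta>\<^sup>0\<close>.\<close>

lemma block_proj_add: "block_proj blk i (X + Y) = block_proj blk i X + block_proj blk i Y"
  by (simp add: block_proj_def vec_eq_iff)

lemma block_proj_diff: "block_proj blk i (X - Y) = block_proj blk i X - block_proj blk i Y"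
  by (simp add: block_proj_def vec_eq_iff)

lemma block_proj_scaleR: "block_proj blk i (a *\<^sub>R X) = a *\<^sub>R block_proj blk i X"
  by (simp add: block_proj_def vec_eq_iff)

lemma in_block_block_proj: "in_block blk i (block_proj blk i X)"
  by (simp add: block_proj_def in_block_def)

lemma block_proj_eq_self: "in_block blk i Z \<Longrightarrow> block_proj blk i Z = Z"
  by (auto simp: block_proj_def in_block_def vec_eq_iff)

lemma in_block_0 [simp]: "in_block blk i 0"
  by (simp add: in_block_def)

lemma in_block_uminus: "in_block blk i Z \<Longrightarrow> in_block blk i (- Z)"
  by (simp add: in_block_def)

lemma in_block_diff: "in_block blk i Z \<Longrightarrow> in_block blk i W \<Longrightarrow> in_block blk i (Z - W)"
  by (simp add: in_block_def)

lemma in_block_scaleR: "in_block blk i Z \<Longrightarrow> in_block blk i (a *\<^sub>R Z)"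
  by (simp add: in_block_def)

lemma closed_in_block: "closed {Z :: real^'c::finite. in_block blk i Z}"
proof -
  have "{Z :: real^'c. in_block blk i Z} = (\<Inter>c\<in>{c. blk c \<noteq> i}. {Z. Z $ c = 0})"
    by (auto simp: in_block_def)
  moreover have "closed {Z :: real^'c. Z $ c = 0}" for c
    by (intro closed_Collect_eq continuous_intros)
  ultimately show ?thesis
    by auto
qed

lemma inner_eq_sum_block_proj:
  fixes w v :: "real^'c::finite"
  assumes "\<forall>c. blk c < p"
  shows "w \<bullet> v = (\<Sum>i<p. block_proj blk i w \<bullet> block_proj blk i v)"
proof -
  have "(\<Sum>i<p. block_proj blk i w \<bullet> block_proj blk i v)
      = (\<Sum>c\<in>UNIV. \<Sum>i<p. if blk c = i then w $ c * v $ c else 0)"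
    by (subst sum.swap) (simp add: inner_vec_def block_proj_def if_distrib cong: if_cong)
  also have "\<dots> = w \<bullet> v"
    using assms by (simp add: inner_vec_def)
  finally show ?thesis ..
qed

lemma block_norm_nonneg: "is_block_norm blk i N \<Longrightarrow> in_block blk i Z \<Longrightarrow> 0 \<le> N Z"
  unfolding is_block_norm_def by blast

lemma block_norm_eq_0_iff: "is_block_norm blk i N \<Longrightarrow> in_block blk i Z \<Longrightarrow> N Z = 0 \<longleftrightarrow> Z = 0"
  unfolding is_block_norm_def by blast

lemma block_norm_0: "is_block_norm blk i N \<Longrightarrow> N 0 = 0"
  using block_norm_eq_0_iff[of blk i N 0] by simp

lemma block_norm_scaleR:
  "is_block_norm blk i N \<Longrightarrow> in_block blk i Z \<Longrightarrow> N (a *\<^sub>R Z) = \<bar>a\<bar> * N Z"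
  unfolding is_block_norm_def by blast

lemma block_norm_minus: "is_block_norm blk i N \<Longrightarrow> in_block blk i Z \<Longrightarrow> N (- Z) = N Z"
  using block_norm_scaleR[of blk i N Z "-1"] by simp

lemma block_norm_triangle:
  "is_block_norm blk i N \<Longrightarrow> in_block blk i Z \<Longrightarrow> in_block blk i W \<Longrightarrow> N (Z + W) \<le> N Z + N W"
  unfolding is_block_norm_def by blast

lemma convex_on_block_norm_block_proj:
  assumes "is_block_norm blk i N"
  shows "convex_on UNIV (\<lambda>X. N (block_proj blk i X))"
proof (rule convex_onI[OF _ convex_UNIV])
  fix u :: real and X Y
  assume "0 < u" "u < 1"
  let ?P = "block_proj blk i"
  have "N (?P ((1 - u) *\<^sub>R X + u *\<^sub>R Y)) \<le> N ((1 - u) *\<^sub>R ?P X) + N (u *\<^sub>R ?P Y)"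
    unfolding block_proj_add block_proj_scaleR
    by (intro block_norm_triangle[OF assms] in_block_scaleR in_block_block_proj)
  also have "\<dots> = (1 - u) * N (?P X) + u * N (?P Y)"
    using \<open>0 < u\<close> \<open>u < 1\<close> block_norm_scaleR[OF assms in_block_block_proj] by simp
  finally show "N (?P ((1 - u) *\<^sub>R X + u *\<^sub>R Y)) \<le> (1 - u) * N (?P X) + u * N (?P Y)" .
qed

text \<open>Norm equivalence on the block: extended by the projection, N becomes a convex function
  on the whole space, hence continuous, and attains a positive minimum on the compact unit
  sphere of the block.\<close>
lemma block_norm_lower_bound:
  fixes N :: "real^'c::finite \<Rightarrow> real"
  assumes N: "is_block_norm blk i N"
  obtains m where "m > 0" "\<And>Z. in_block blk i Z \<Longrightarrow> m * norm Z \<le> N Z"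
proof (cases "\<exists>Z. in_block blk i Z \<and> Z \<noteq> 0")
  case False
  then show ?thesis
    using that[of 1] block_norm_0[OF N] by force
next
  case True
  define S where "S = {Z :: real^'c. in_block blk i Z} \<inter> sphere 0 1"
  have unit: "(1 / norm Z) *\<^sub>R Z \<in> S" if "in_block blk i Z" "Z \<noteq> 0" for Z
    using that in_block_scaleR by (auto simp: S_def)
  then have "S \<noteq> {}"
    using True by blast
  moreover have "compact S"
    unfolding S_def by (intro closed_Int_compact closed_in_block compact_sphere)
  moreover have "continuous_on S (\<lambda>Z. N (block_proj blk i Z))"
    using convex_on_continuous[OF open_UNIV convex_on_block_norm_block_proj[OF N]]
    by (rule continuous_on_subset) simp
  ultimately obtain z where "z \<in> S" "\<And>Z. Z \<in> S \<Longrightarrow> N (block_proj blk i z) \<le> N (block_proj blk i Z)"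
    using continuous_attains_inf[of S "\<lambda>Z. N (block_proj blk i Z)"] by blast
  then have z: "z \<in> S" "\<And>Z. Z \<in> S \<Longrightarrow> N z \<le> N Z"
    by (auto simp: S_def block_proj_eq_self)
  have "N z > 0"
    using z(1) block_norm_nonneg[OF N] block_norm_eq_0_iff[OF N] by (fastforce simp: S_def)
  moreover have "N z * norm Z \<le> N Z" if Z: "in_block blk i Z" for Z
  proof (cases "Z = 0")
    case False
    then have "N z \<le> N Z / norm Z"
      using z(2)[OF unit[OF Z False]] block_norm_scaleR[OF N Z] by simp
    then show ?thesis
      using False by (simp add: field_simps)
  qed (simp add: block_norm_0[OF N])
  ultimately show ?thesis
    using that by blast
qed

lemma bdd_above_dual_norm_set:
  fixes N :: "real^'c::finite \<Rightarrow> real"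
  assumes N: "is_block_norm blk i N"
  shows "bdd_above {Y \<bullet> Z | Z. in_block blk i Z \<and> N Z \<le> 1}"
proof -
  obtain m where m: "m > 0" "\<And>Z. in_block blk i Z \<Longrightarrow> m * norm Z \<le> N Z"
    using block_norm_lower_bound[OF N] by blast
  have "Y \<bullet> Z \<le> norm Y * (1 / m)" if "in_block blk i Z" "N Z \<le> 1" for Z
  proof -
    have "norm Z \<le> 1 / m"
      using m that by (simp add: field_simps) (meson order_trans)
    then show ?thesis
      by (meson norm_cauchy_schwarz mult_left_mono norm_ge_zero order_trans)
  qed
  then show ?thesis
    unfolding bdd_above_def by blast
qed

lemma inner_le_dual_norm_mult:
  fixes N :: "real^'c::finite \<Rightarrow> real"
  assumes N: "is_block_norm blk i N" and v: "in_block blk i v"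
  shows "Y \<bullet> v \<le> dual_norm blk i N Y * N v"
proof (cases "v = 0")
  case False
  then have "N v > 0"
    using block_norm_nonneg[OF N v] block_norm_eq_0_iff[OF N v] by linarith
  moreover have "Y \<bullet> ((1 / N v) *\<^sub>R v) \<le> dual_norm blk i N Y"
    unfolding dual_norm_def
    using bdd_above_dual_norm_set[OF N] in_block_scaleR[OF v] block_norm_scaleR[OF N v] \<open>N v > 0\<close>
    by (intro cSup_upper) (auto intro!: exI[of _ "(1 / N v) *\<^sub>R v"])
  ultimately show ?thesis
    by (simp add: field_simps)
qed (simp add: block_norm_0[OF N])

lemma dual_norm_nonneg:
  fixes N :: "real^'c::finite \<Rightarrow> real"
  assumes N: "is_block_norm blk i N"
  shows "0 \<le> dual_norm blk i N Y"
  unfolding dual_norm_def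
  using bdd_above_dual_norm_set[OF N] block_norm_0[OF N]
  by (intro cSup_upper2[of "Y \<bullet> 0"]) (auto intro!: exI[of _ 0])

lemma dual_norm_le:
  assumes N: "is_block_norm blk i N"
    and "\<And>Z. in_block blk i Z \<Longrightarrow> N Z \<le> 1 \<Longrightarrow> Y \<bullet> Z \<le> b"
  shows "dual_norm blk i N Y \<le> b"
  unfolding dual_norm_def
  using assms block_norm_0[OF N] by (intro cSup_least) (auto intro!: exI[of _ 0])

lemma dual_norm_0:
  fixes N :: "real^'c::finite \<Rightarrow> real"
  assumes N: "is_block_norm blk i N"
  shows "dual_norm blk i N 0 = 0"
  using dual_norm_le[OF N, of 0 0] dual_norm_nonneg[OF N, of 0] by simp

text \<open>The ball of radius t around x contains \<open>x - t *\<^sub>R Z\<close> for every Z in the N-unit ball.\<close>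
lemma linear_minimizer_inner_le:
  fixes N :: "real^'c::finite \<Rightarrow> real"
  assumes N: "is_block_norm blk i N" and "0 \<le> t"
    and x: "in_block blk i x" and x': "in_block blk i x'"
    and radius: "N (x' - x) \<le> t"
    and min: "\<And>Z. in_block blk i Z \<Longrightarrow> N (Z - x) \<le> t \<Longrightarrow> g \<bullet> x' \<le> g \<bullet> Z"
  shows "g \<bullet> (x' - x) \<le> - t * dual_norm blk i N g"
proof (cases "t = 0")
  case True
  then have "x' - x = 0"
    using radius block_norm_nonneg[OF N] block_norm_eq_0_iff[OF N] in_block_diff[OF x' x]
    by (meson order_antisym)
  then show ?thesis
    using True by simp
next
  case False
  with \<open>0 \<le> t\<close> have "t > 0"
    by simp
  have "dual_norm blk i N g \<le> - (g \<bullet> (x' - x)) / t"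
  proof (rule dual_norm_le[OF N])
    fix Z
    assume Z: "in_block blk i Z" "N Z \<le> 1"
    have "N ((x - t *\<^sub>R Z) - x) = t * N Z"
      using block_norm_minus[OF N in_block_scaleR[OF Z(1)]] block_norm_scaleR[OF N Z(1)] \<open>t > 0\<close>
      by simp
    also have "\<dots> \<le> t"
      using Z(2) \<open>t > 0\<close> by simp
    finally have "g \<bullet> x' \<le> g \<bullet> (x - t *\<^sub>R Z)"
      using min in_block_diff[OF x in_block_scaleR[OF Z(1)]] by blast
    then show "g \<bullet> Z \<le> - (g \<bullet> (x' - x)) / t"
      using \<open>t > 0\<close> by (simp add: field_simps inner_diff_right)
  qed
  then show ?thesis
    using \<open>t > 0\<close> by (simp add: field_simps)
qed

text \<open>The radius \<open>d / a\<close>, with d the dual norm of g, minimizes \<open>- r d + a r\<^sup>2 / 2\<close>;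
  the minimum is \<open>- d\<^sup>2 / (2 a)\<close>.\<close>
lemma linear_minimizer_decrease:
  fixes N :: "real^'c::finite \<Rightarrow> real"
  assumes N: "is_block_norm blk i N" and "0 \<le> a"
    and x: "in_block blk i x" and x': "in_block blk i x'"
    and radius: "N (x' - x) \<le> dual_norm blk i N g / a"
    and min: "\<And>Z. in_block blk i Z \<Longrightarrow> N (Z - x) \<le> dual_norm blk i N g / a \<Longrightarrow> g \<bullet> x' \<le> g \<bullet> Z"
  shows "g \<bullet> (x' - x) + a * (N (x' - x))\<^sup>2 / 2 \<le> - (dual_norm blk i N g)\<^sup>2 / (2 * a)"
proof -
  define d where "d = dual_norm blk i N g"
  have "0 \<le> d"
    unfolding d_def by (rule dual_norm_nonneg[OF N])
  with \<open>0 \<le> a\<close> have "0 \<le> d / a"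
    by simp
  have "g \<bullet> (x' - x) \<le> - (d / a) * d"
    unfolding d_def using linear_minimizer_inner_le[OF N _ x x' radius min] \<open>0 \<le> d / a\<close> d_def
    by simp
  moreover have "a * (N (x' - x))\<^sup>2 \<le> a * (d / a)\<^sup>2"
    using \<open>0 \<le> a\<close> radius block_norm_nonneg[OF N in_block_diff[OF x' x]]
    by (intro mult_left_mono power_mono) (auto simp: d_def)
  moreover have "- (d / a) * d + a * (d / a)\<^sup>2 / 2 = - d\<^sup>2 / (2 * a)"
    by (cases "a = 0") (simp_all add: field_simps power2_eq_square)
  ultimately show ?thesis
    unfolding d_def by linarith
qed

lemma quadratic_upper_bound_of_gradient:
  fixes f :: "'a::real_inner \<Rightarrow> real"
  assumes grad: "\<And>X. (f has_derivative (\<lambda>h. G X \<bullet> h)) (at X)"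
    and increment: "\<And>s. 0 \<le> s \<Longrightarrow> s \<le> 1 \<Longrightarrow> (G (X + s *\<^sub>R v) - G X) \<bullet> v \<le> s * Q"
  shows "f (X + v) \<le> f X + G X \<bullet> v + Q / 2"
proof -
  define \<psi> where "\<psi> s = f (X + s *\<^sub>R v) - s * (G X \<bullet> v) - Q * s\<^sup>2 / 2" for s :: real
  have line: "((\<lambda>s. f (X + s *\<^sub>R v)) has_real_derivative G (X + s *\<^sub>R v) \<bullet> v) (at s)" for s
  proof -
    have "((\<lambda>s. X + s *\<^sub>R v) has_derivative (\<lambda>h. h *\<^sub>R v)) (at s)"
      by (auto intro!: derivative_eq_intros)
    from has_derivative_compose[OF this grad]
    show ?thesis
      by (rule has_derivative_imp_has_field_derivative) (simp add: mult.commute)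
  qed
  have "\<psi> 1 \<le> \<psi> 0"
  proof (rule DERIV_nonpos_imp_nonincreasing[of 0 1 \<psi>])
    fix s :: real
    assume "0 \<le> s" "s \<le> 1"
    have "(\<psi> has_real_derivative G (X + s *\<^sub>R v) \<bullet> v - G X \<bullet> v - Q * s) (at s)"
      unfolding \<psi>_def by (rule derivative_eq_intros line refl | simp)+
    moreover have "G (X + s *\<^sub>R v) \<bullet> v - G X \<bullet> v - Q * s \<le> 0"
      using increment[OF \<open>0 \<le> s\<close> \<open>s \<le> 1\<close>] by (simp add: inner_diff_left mult.commute)
    ultimately show "\<exists>y. (\<psi> has_real_derivative y) (at s) \<and> y \<le> 0"
      by blast
  qed simp
  then show ?thesis
    by (simp add: \<psi>_def)
qed

lemma layerwise_smooth_gradient_increment_le: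
  fixes N :: "nat \<Rightarrow> real^'c::finite \<Rightarrow> real"
  assumes blk_range: "\<forall>c. blk c < p"
    and norms: "\<forall>i<p. is_block_norm blk i (N i)"
    and smooth: "layerwise_L0L1_smooth p blk N G L0 L1"
    and "0 \<le> s"
  shows "(G (X + s *\<^sub>R v) - G X) \<bullet> v
    \<le> s * (\<Sum>i<p. (L0 i + L1 i * dual_norm blk i (N i) (block_proj blk i (G X)))
                  * (N i (block_proj blk i v))\<^sup>2)"
proof -
  let ?P = "\<lambda>i. block_proj blk i"
  let ?a = "\<lambda>i. L0 i + L1 i * dual_norm blk i (N i) (?P i (G X))"
  let ?Y = "X + s *\<^sub>R v"
  have "(G ?Y - G X) \<bullet> v = (\<Sum>i<p. (?P i (G X) - ?P i (G ?Y)) \<bullet> - ?P i v)"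
    unfolding inner_eq_sum_block_proj[OF blk_range, of "G ?Y - G X"]
    by (simp add: block_proj_diff inner_diff_left inner_diff_right)
  also have "\<dots> \<le> (\<Sum>i<p. s * (?a i * (N i (?P i v))\<^sup>2))"
  proof (rule sum_mono)
    fix i
    assume "i \<in> {..<p}"
    then have Ni: "is_block_norm blk i (N i)"
      using norms by simp
    have "(?P i (G X) - ?P i (G ?Y)) \<bullet> - ?P i v
        \<le> dual_norm blk i (N i) (?P i (G X) - ?P i (G ?Y)) * N i (?P i v)"
      using inner_le_dual_norm_mult[OF Ni in_block_uminus[OF in_block_block_proj]]
        block_norm_minus[OF Ni in_block_block_proj] by simp
    also have "\<dots> \<le> ?a i * N i (?P i X - ?P i ?Y) * N i (?P i v)"
      using smooth \<open>i \<in> {..<p}\<close> block_norm_nonneg[OF Ni in_block_block_proj]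
      unfolding layerwise_L0L1_smooth_def by (simp add: mult_right_mono)
    also have "N i (?P i X - ?P i ?Y) = s * N i (?P i v)"
      using block_norm_scaleR[OF Ni in_block_block_proj, of "- s"] \<open>0 \<le> s\<close>
      by (simp add: block_proj_add block_proj_scaleR)
    finally show "(?P i (G X) - ?P i (G ?Y)) \<bullet> - ?P i v \<le> s * (?a i * (N i (?P i v))\<^sup>2)"
      by (simp add: power2_eq_square mult_ac)
  qed
  finally show ?thesis
    by (simp add: sum_distrib_left)
qed

lemma layerwise_smooth_descent:
  fixes N :: "nat \<Rightarrow> real^'c::finite \<Rightarrow> real"
  assumes blk_range: "\<forall>c. blk c < p"
    and norms: "\<forall>i<p. is_block_norm blk i (N i)"
    and grad: "\<And>X. (f has_derivative (\<lambda>h. G X \<bullet> h)) (at X)"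
    and smooth: "layerwise_L0L1_smooth p blk N G L0 L1"
  shows "f Y \<le> f X + (\<Sum>i<p. block_proj blk i (G X) \<bullet> block_proj blk i (Y - X)
      + (L0 i + L1 i * dual_norm blk i (N i) (block_proj blk i (G X)))
        * (N i (block_proj blk i (Y - X)))\<^sup>2 / 2)"
  using quadratic_upper_bound_of_gradient[OF grad
      layerwise_smooth_gradient_increment_le[OF blk_range norms smooth], of X "Y - X"]
  unfolding inner_eq_sum_block_proj[OF blk_range, of "G X"]
  by (simp add: sum.distrib sum_divide_distrib mult.commute)

lemma square_div_ge_tangent:
  fixes x y c :: real
  assumes "0 \<le> y" "y = 0 \<Longrightarrow> x = 0"
  shows "2 * c * x - c\<^sup>2 * y \<le> x\<^sup>2 / y"
proof (cases "y = 0")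
  case False
  with assms have "y > 0"
    by simp
  have "x\<^sup>2 / y - (2 * c * x - c\<^sup>2 * y) = (x - c * y)\<^sup>2 / y"
    using \<open>y > 0\<close> by (simp add: field_simps power2_eq_square)
  also have "\<dots> \<ge> 0"
    using \<open>y > 0\<close> by simp
  finally show ?thesis
    by simp
qed (use assms in simp)

text \<open>Sedrakyan's form of the Cauchy-Schwarz inequality, obtained by summing the tangent bounds
  at the slope \<open>(\<Sum>x) / (\<Sum>y)\<close>.\<close>
lemma sum_squares_div_ge:
  fixes x y :: "'i \<Rightarrow> real"
  assumes "\<And>j. j \<in> A \<Longrightarrow> 0 \<le> y j" "\<And>j. j \<in> A \<Longrightarrow> y j = 0 \<Longrightarrow> x j = 0"
  shows "(\<Sum>j\<in>A. x j)\<^sup>2 / (\<Sum>j\<in>A. y j) \<le> (\<Sum>j\<in>A. (x j)\<^sup>2 / y j)"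
proof -
  define c where "c = (\<Sum>j\<in>A. x j) / (\<Sum>j\<in>A. y j)"
  have "(\<Sum>j\<in>A. x j)\<^sup>2 / (\<Sum>j\<in>A. y j) = 2 * c * (\<Sum>j\<in>A. x j) - c\<^sup>2 * (\<Sum>j\<in>A. y j)"
    by (cases "(\<Sum>j\<in>A. y j) = 0") (simp_all add: c_def field_simps power2_eq_square)
  also have "\<dots> = (\<Sum>j\<in>A. 2 * c * x j - c\<^sup>2 * y j)"
    by (simp add: sum_subtractf sum_distrib_left)
  also have "\<dots> \<le> (\<Sum>j\<in>A. (x j)\<^sup>2 / y j)"
    using assms by (intro sum_mono square_div_ge_tangent)
  finally show ?thesis .
qed

lemma square_div_add_strict_mono:
  fixes C h u :: real
  assumes "0 < h" "h < u" "0 \<le> C"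
  shows "h\<^sup>2 / (C + h) < u\<^sup>2 / (C + u)"
proof -
  have "h\<^sup>2 * (C + u) < u\<^sup>2 * (C + h)"
  proof -
    have "u\<^sup>2 * (C + h) - h\<^sup>2 * (C + u) = (u - h) * (C * (u + h) + h * u)"
      by (simp add: algebra_simps power2_eq_square)
    also have "\<dots> > 0"
      using assms by (intro mult_pos_pos add_nonneg_pos) auto
    finally show ?thesis
      by simp
  qed
  then show ?thesis
    using assms by (simp add: field_simps)
qed

lemma gluon_step_decrease:
  fixes blk :: "'c::finite \<Rightarrow> nat" and N :: "nat \<Rightarrow> real^'c \<Rightarrow> real"
    and G :: "real^'c \<Rightarrow> real^'c" and Xs :: "nat \<Rightarrow> real^'c" and k :: nat
  defines "d i \<equiv> dual_norm blk i (N i) (block_proj blk i (G (Xs k)))"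
  assumes blk_range: "\<forall>c. blk c < p"
    and norms: "\<forall>i<p. is_block_norm blk i (N i)"
    and grad: "\<And>X. (f has_derivative (\<lambda>h. G X \<bullet> h)) (at X)"
    and smooth: "layerwise_L0L1_smooth p blk N G L0 L1"
    and L0: "\<forall>i<p. 0 \<le> L0 i" and L1: "\<forall>i<p. 0 \<le> L1 i"
    and radius: "\<forall>i<p. t i k = d i / (L0 i + L1 i * d i)"
    and gluon: "gluon_iterates p blk N G t Xs"
  shows "f (Xs (Suc k)) \<le> f (Xs k) - (\<Sum>i<p. (d i)\<^sup>2 / (L0 i + L1 i * d i)) / 2"
proof -
  let ?X = "Xs k" and ?Y = "Xs (Suc k)"
  let ?g = "\<lambda>i. block_proj blk i (G ?X)"
  let ?a = "\<lambda>i. L0 i + L1 i * d i"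
  have "f ?Y \<le> f ?X + (\<Sum>i<p. ?g i \<bullet> block_proj blk i (?Y - ?X)
      + ?a i * (N i (block_proj blk i (?Y - ?X)))\<^sup>2 / 2)"
    unfolding d_def by (rule layerwise_smooth_descent[OF blk_range norms grad smooth])
  also have "\<dots> \<le> f ?X + (\<Sum>i<p. - (d i)\<^sup>2 / (2 * ?a i))"
  proof (intro add_left_mono sum_mono)
    fix i
    assume "i \<in> {..<p}"
    then have Ni: "is_block_norm blk i (N i)"
      using norms by simp
    have "0 \<le> ?a i"
      using L0 L1 dual_norm_nonneg[OF Ni] \<open>i \<in> {..<p}\<close> by (simp add: d_def)
    have "t i k = d i / ?a i"
      using radius \<open>i \<in> {..<p}\<close> by simp
    moreover have "N i (block_proj blk i ?Y - block_proj blk i ?X) \<le> t i k"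
      and "\<And>Z. in_block blk i Z \<Longrightarrow> N i (Z - block_proj blk i ?X) \<le> t i k
        \<Longrightarrow> ?g i \<bullet> block_proj blk i ?Y \<le> ?g i \<bullet> Z"
      using gluon \<open>i \<in> {..<p}\<close> unfolding gluon_iterates_def by auto
    ultimately show "?g i \<bullet> block_proj blk i (?Y - ?X)
        + ?a i * (N i (block_proj blk i (?Y - ?X)))\<^sup>2 / 2 \<le> - (d i)\<^sup>2 / (2 * ?a i)"
      unfolding block_proj_diff d_def
      by (intro linear_minimizer_decrease[OF Ni \<open>0 \<le> ?a i\<close>[unfolded d_def]
            in_block_block_proj in_block_block_proj]) simp_all
  qed
  also have "\<dots> = f ?X - (\<Sum>i<p. (d i)\<^sup>2 / ?a i) / 2"
    by (simp add: sum_negf sum_divide_distrib mult.commute)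
  finally show ?thesis .
qed

lemma sum_decrements_le:
  fixes F D :: "nat \<Rightarrow> real"
  assumes "\<And>k. F (Suc k) \<le> F k - D k" and "\<And>k. m \<le> F k"
  shows "(\<Sum>k<n. D k) \<le> F 0 - m"
proof -
  have "(\<Sum>k<n. D k) \<le> (\<Sum>k<n. F k - F (Suc k))"
    using assms(1) by (intro sum_mono) (simp add: algebra_simps)
  also have "\<dots> = F 0 - F n"
    by (rule sum_lessThan_telescope')
  finally show ?thesis
    using assms(2)[of n] by simp
qed

text \<open>At a block with vanishing gradient the dual norm vanishes too, so the radius is
  \<open>d / (L0 + L1 d)\<close> at every block.\<close>
lemma gluon_sum_decrease_le:
  fixes blk :: "'c::finite \<Rightarrow> nat" and N :: "nat \<Rightarrow> real^'c \<Rightarrow> real"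
    and G :: "real^'c \<Rightarrow> real^'c" and Xs :: "nat \<Rightarrow> real^'c"
  defines "d k i \<equiv> dual_norm blk i (N i) (block_proj blk i (G (Xs k)))"
  assumes blk_range: "\<forall>c. blk c < p"
    and norms: "\<forall>i<p. is_block_norm blk i (N i)"
    and grad: "\<And>X. (f has_derivative (\<lambda>h. G X \<bullet> h)) (at X)"
    and smooth: "layerwise_L0L1_smooth p blk N G L0 L1"
    and L0: "\<forall>i<p. 0 \<le> L0 i" and L1: "\<forall>i<p. 0 \<le> L1 i"
    and radius: "\<forall>k i. t i k = (if block_proj blk i (G (Xs k)) = 0 then 0
        else d k i / (L0 i + L1 i * d k i))"
    and gluon: "gluon_iterates p blk N G t Xs"
    and bdd: "bdd_below (range f)"
  shows "(\<Sum>k<n. \<Sum>i<p. (d k i)\<^sup>2 / (L0 i + L1 i * d k i)) \<le> 2 * (f (Xs 0) - Inf (range f))"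
proof -
  have "\<forall>i<p. t i k = d k i / (L0 i + L1 i * d k i)" for k
    using radius norms by (auto simp: d_def dual_norm_0)
  then have "f (Xs (Suc k)) \<le> f (Xs k) - (\<Sum>i<p. (d k i)\<^sup>2 / (L0 i + L1 i * d k i)) / 2" for k
    unfolding d_def by (rule gluon_step_decrease[OF blk_range norms grad smooth L0 L1 _ gluon])
  then have "(\<Sum>k<n. (\<Sum>i<p. (d k i)\<^sup>2 / (L0 i + L1 i * d k i)) / 2) \<le> f (Xs 0) - Inf (range f)"
    by (rule sum_decrements_le[where F = "\<lambda>k. f (Xs k)"]) (rule cInf_lower[OF rangeI bdd])
  then show ?thesis
    by (simp add: sum_divide_distrib[symmetric])
qed

text \<open>Sedrakyan's inequality with \<open>x\<^sub>i = g\<^sub>i / L1\<^sub>i\<close> and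
  \<open>y\<^sub>i = L0\<^sub>i / L1\<^sub>i\<^sup>2 + g\<^sub>i / L1\<^sub>i\<close>, for which
  \<open>x\<^sub>i\<^sup>2 / y\<^sub>i = g\<^sub>i\<^sup>2 / (L0\<^sub>i + L1\<^sub>i g\<^sub>i)\<close>, followed by the monotonicity of
  \<open>u\<^sup>2 / (C + u)\<close>.\<close>
lemma weighted_sum_le_of_sum_square_div_le:
  fixes g L0 L1 :: "'i \<Rightarrow> real"
  assumes "\<And>i. i \<in> A \<Longrightarrow> 0 \<le> L0 i" "\<And>i. i \<in> A \<Longrightarrow> 0 < L1 i" "\<And>i. i \<in> A \<Longrightarrow> 0 \<le> g i"
    and "0 < h"
    and "(\<Sum>i\<in>A. (g i)\<^sup>2 / (L0 i + L1 i * g i)) \<le> h\<^sup>2 / ((\<Sum>i\<in>A. L0 i / (L1 i)\<^sup>2) + h)"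
  shows "(\<Sum>i\<in>A. g i / L1 i) \<le> h"
proof (rule ccontr)
  assume gt: "\<not> (\<Sum>i\<in>A. g i / L1 i) \<le> h"
  define y where "y i = L0 i / (L1 i)\<^sup>2 + g i / L1 i" for i
  have y: "0 \<le> y i" "y i = (L0 i + L1 i * g i) / (L1 i)\<^sup>2" if "i \<in> A" for i
    using assms(1-3)[OF that] by (simp_all add: y_def field_simps power2_eq_square)
  have "h\<^sup>2 / ((\<Sum>i\<in>A. L0 i / (L1 i)\<^sup>2) + h) < (\<Sum>i\<in>A. g i / L1 i)\<^sup>2 / (\<Sum>i\<in>A. y i)"
    using assms(1,2,4) gt
    by (simp add: y_def sum.distrib square_div_add_strict_mono sum_nonneg)
  also have "\<dots> \<le> (\<Sum>i\<in>A. (g i / L1 i)\<^sup>2 / y i)"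
  proof (rule sum_squares_div_ge)
    fix i
    assume "i \<in> A" "y i = 0"
    then have "L0 i + L1 i * g i = 0"
      using y(2)[OF \<open>i \<in> A\<close>] assms(2)[OF \<open>i \<in> A\<close>] by simp
    then show "g i / L1 i = 0"
      using assms(1-3)[OF \<open>i \<in> A\<close>] by (simp add: add_nonneg_eq_0_iff)
  qed (use y in simp)
  also have "\<dots> = (\<Sum>i\<in>A. (g i)\<^sup>2 / (L0 i + L1 i * g i))"
  proof (rule sum.cong)
    fix i
    assume "i \<in> A"
    then show "(g i / L1 i)\<^sup>2 / y i = (g i)\<^sup>2 / (L0 i + L1 i * g i)"
      using y(2)[OF \<open>i \<in> A\<close>] assms(2)[OF \<open>i \<in> A\<close>] by (simp add: field_simps power2_eq_square)
  qed simp
  finally show False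
    using assms(5) by simp
qed

lemma ex_less_le_of_sum_le:
  fixes D :: "nat \<Rightarrow> real" and B :: real
  assumes "(\<Sum>k<n. D k) \<le> n * B" and "0 < n"
  shows "\<exists>k<n. D k \<le> B"
proof (rule ccontr)
  assume "\<not> ?thesis"
  then have "(\<Sum>k<n. B) < (\<Sum>k<n. D k)"
    using \<open>0 < n\<close> by (intro sum_strict_mono) (auto simp: not_le)
  with assms(1) show False
    by simp
qed

lemma ceiling_iteration_count_ge:
  fixes \<Delta> C \<epsilon> H :: real
  assumes "0 \<le> C" "0 < \<epsilon>" "0 < H"
    and "K = \<lceil>2 * \<Delta> * C / (\<epsilon>\<^sup>2 * H\<^sup>2) + 2 * \<Delta> / (\<epsilon> * H)\<rceil>"
  shows "2 * \<Delta> \<le> of_int K * ((\<epsilon> * H)\<^sup>2 / (C + \<epsilon> * H))"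
proof -
  define B where "B = (\<epsilon> * H)\<^sup>2 / (C + \<epsilon> * H)"
  have "B > 0"
    using assms(1-3) by (simp add: B_def add_nonneg_pos)
  have "2 * \<Delta> / B = 2 * \<Delta> * C / (\<epsilon>\<^sup>2 * H\<^sup>2) + 2 * \<Delta> / (\<epsilon> * H)"
    using assms(1-3) by (simp add: B_def field_simps power2_eq_square)
  also have "\<dots> \<le> of_int K"
    unfolding assms(4) by (rule le_of_int_ceiling)
  finally show ?thesis
    using \<open>B > 0\<close> by (simp add: B_def[symmetric] pos_divide_le_eq)
qed

theorem theorem1:
  fixes p :: nat and blk :: "'c::finite \<Rightarrow> nat"
    and N :: "nat \<Rightarrow> real^'c \<Rightarrow> real"
    and f :: "real^'c \<Rightarrow> real" and G :: "real^'c \<Rightarrow> real^'c"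
    and L0 L1 :: "nat \<Rightarrow> real" and \<epsilon> :: real
    and Xs :: "nat \<Rightarrow> real^'c"
    and t :: "nat \<Rightarrow> nat \<Rightarrow> real" and H :: real and K :: int
  assumes blk_range: "\<forall>c. blk c < p"
    and blk_nonempty: "\<forall>i<p. \<exists>c. blk c = i"
    and norms: "\<forall>i<p. is_block_norm blk i (N i)"
    and grad: "\<forall>X. (f has_derivative (\<lambda>h. G X \<bullet> h)) (at X)"
    and grad_cont: "continuous_on UNIV G"
    and bdd: "bdd_below (range f)"
    and L0_nonneg: "\<forall>i<p. 0 \<le> L0 i"
    and L1_pos: "\<forall>i<p. 0 < L1 i"
    and smooth: "layerwise_L0L1_smooth p blk N G L0 L1"
    and eps: "\<epsilon> > 0"
    and t_def: "\<forall>k i. t i k =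
        (if block_proj blk i (G (Xs k)) = 0 then 0
         else dual_norm blk i (N i) (block_proj blk i (G (Xs k)))
              / (L0 i + L1 i * dual_norm blk i (N i) (block_proj blk i (G (Xs k)))))"
    and gluon: "gluon_iterates p blk N G t Xs"
    and H_def: "H = (1 / real p) * (\<Sum>j<p. 1 / L1 j)"
    and K_def: "K = \<lceil>2 * (f (Xs 0) - Inf (range f)) * (\<Sum>i<p. L0 i / (L1 i)\<^sup>2) / (\<epsilon>\<^sup>2 * H\<^sup>2)
                   + 2 * (f (Xs 0) - Inf (range f)) / (\<epsilon> * H)\<rceil>"
    and K_pos: "K \<ge> 1"
  shows "Min ((\<lambda>k. \<Sum>i<p. ((1 / L1 i) / H) * dual_norm blk i (N i) (block_proj blk i (G (Xs k))))
              ` {0..<nat K}) \<le> \<epsilon>"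
proof -
  define g where "g k i = dual_norm blk i (N i) (block_proj blk i (G (Xs k)))" for k i
  define D where "D k = (\<Sum>i<p. (g k i)\<^sup>2 / (L0 i + L1 i * g k i))" for k
  define \<Delta> where "\<Delta> = f (Xs 0) - Inf (range f)"
  define C where "C = (\<Sum>i<p. L0 i / (L1 i)\<^sup>2)"
  define B where "B = (\<epsilon> * H)\<^sup>2 / (C + \<epsilon> * H)"
  have "p > 0"
    using blk_range by (metis gr_zeroI not_less0)
  then have "H > 0"
    unfolding H_def using L1_pos by (intro mult_pos_pos sum_pos) auto
  have g_nonneg: "0 \<le> g k i" if "i < p" for k i
    unfolding g_def using dual_norm_nonneg norms that by blast
  have "0 \<le> C"
    unfolding C_def using L0_nonneg by (auto intro!: sum_nonneg)
  have "(\<Sum>k<nat K. D k) \<le> 2 * \<Delta>"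
    unfolding D_def g_def \<Delta>_def
    by (rule gluon_sum_decrease_le[OF blk_range norms grad[rule_format] smooth L0_nonneg _ t_def
          gluon bdd]) (simp add: L1_pos less_imp_le)
  also have "\<dots> \<le> real (nat K) * B"
    using ceiling_iteration_count_ge[OF \<open>0 \<le> C\<close> eps \<open>H > 0\<close> K_def[folded \<Delta>_def C_def]] K_pos
    by (simp add: B_def)
  finally have "(\<Sum>k<nat K. D k) \<le> real (nat K) * B" .
  moreover have "0 < nat K"
    using K_pos by simp
  ultimately obtain k where "k < nat K" and "D k \<le> B"
    using ex_less_le_of_sum_le by blast
  have "(\<Sum>i<p. g k i / L1 i) \<le> \<epsilon> * H"
    using \<open>D k \<le> B\<close> unfolding D_def B_def C_def
    by (rule weighted_sum_le_of_sum_square_div_le[rotated 4])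
      (use L0_nonneg L1_pos g_nonneg eps \<open>H > 0\<close> in auto)
  moreover have "(\<Sum>i<p. ((1 / L1 i) / H) * g k i) = (\<Sum>i<p. g k i / L1 i) / H"
    by (simp add: sum_divide_distrib)
  ultimately have "(\<Sum>i<p. ((1 / L1 i) / H) * g k i) \<le> \<epsilon>"
    using \<open>H > 0\<close> by (simp add: pos_divide_le_eq)
  then show ?thesis
    using \<open>k < nat K\<close> by (auto simp: Min_le_iff g_def)
qed

end
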